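(* Let $\alpha=(\alpha_n)_{n\in\mathbb{Z}}\in(k^\times)^{\mathbb{Z}}$, $\beta=(\beta_n)_{n\in\mathbb{Z}}\in k^{\mathbb{Z}}$ and $r\in\mathbb{Z}$. Then $(\phi_\alpha\theta_r)\,\phi^{(1)}_\beta\,(\phi_\alpha\theta_r)^{-1}=\phi^{(1)}_{\alpha^{-1}\beta[-r]}$. In particular, $\phi_\alpha\phi^{(1)}_\beta\phi_\alpha^{-1}=\phi^{(1)}_{\alpha^{-1}\beta}$.
   Context: Let $k$ be a field and $0\neq q\in k$ not a root of unity. $H=k_q[x,x^{-1},y]$ is the $k$-algebra generated by $x,x^{-1},y$ with $xx^{-1}=x^{-1}x=1$, $yx=qxy$; $\{x^ny^m:n\in\mathbb{Z},m\in\mathbb{N}\}$ is a $k$-basis. For sequences in $k^{\mathbb{Z}}$ operations are componentwise; $\alpha^{-1}=(\alpha_n^{-1})_n$ and $\beta[r]$ denotes the sequence with $\beta[r]_n=\beta_{n+r}$. $\theta_r$ is the linear map $x^ny^m\mapsto x^{n+r}y^m$; $\phi_\alpha$ is the linear map with $\phi_\alpha(x^n)=x^n$, $\phi_\alpha(x^ny^m)=(\prod_{i=0}^{m-1}\alpha_{n+i})x^ny^m$ for $m\ge1$. With $(j)_q=1+q+\dots+q^{j-1}$, $(m,0)_q=1$, $(m,j)_q=\prod_{i=0}^{j-1}(m-i)_q$, $\beta_{n,0}=1$, $\beta_{n,j}=\prod_{i=0}^{j-1}\beta_{n+i}$, let $\phi^{(1)}_\beta$ be the linear map $H\to H$ with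 $\phi^{(1)}_\beta(x^ny^m)=x^ny^m+\sum_{l=0}^{m-1}(m,m-l)_q\big(\beta_{n,m-l}x^{n+m-l}-\beta_{n,m-l-1}\beta_{n+m-1}x^{n+m-l-1}\big)y^l$. *)

theory Defs
  imports Main "HOL-Library.Poly_Mapping"
begin

text \<open>Elements of the quantum torus-like algebra H = k_q[x,x^-1,y], viewed as a k-vector
space with basis x^n y^m (n :: int, m :: nat): finitely supported coefficient functions.\<close>

type_synonym 'k qH = "(int \<times> nat) \<Rightarrow>\<^sub>0 'k"

definition hscale :: "'k::comm_ring_1 \<Rightarrow> 'k qH \<Rightarrow> 'k qH" where
  "hscale c p = Poly_Mapping.map (\<lambda>v. c * v) p"

definition lin_ext :: "(int \<Rightarrow> nat \<Rightarrow> 'k::comm_ring_1 qH) \<Rightarrow> 'k qH \<Rightarrow> 'k qH" where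
  "lin_ext g p = (\<Sum>nm\<in>Poly_Mapping.keys p. hscale (Poly_Mapping.lookup p nm) (g (fst nm) (snd nm)))"

definition xy :: "int \<Rightarrow> nat \<Rightarrow> 'k::comm_ring_1 qH" where
  "xy n m = Poly_Mapping.single (n, m) 1"

definition not_root_of_unity :: "'k::field \<Rightarrow> bool" where
  "not_root_of_unity q \<longleftrightarrow> (\<forall>n::nat. n > 0 \<longrightarrow> q ^ n \<noteq> 1)"

definition qint :: "'k::comm_ring_1 \<Rightarrow> nat \<Rightarrow> 'k" where
  "qint q j = (\<Sum>i<j. q ^ i)"

definition qfall :: "'k::comm_ring_1 \<Rightarrow> nat \<Rightarrow> nat \<Rightarrow> 'k" where
  "qfall q m j = (\<Prod>i<j. qint q (m - i))"

definition bprod :: "(int \<Rightarrow> 'k::comm_ring_1) \<Rightarrow> int \<Rightarrow> nat \<Rightarrow> 'k" where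
  "bprod \<beta> n j = (\<Prod>i<j. \<beta> (n + int i))"

definition theta :: "int \<Rightarrow> 'k::comm_ring_1 qH \<Rightarrow> 'k qH" where
  "theta r = lin_ext (\<lambda>n m. xy (n + r) m)"

definition phiA :: "(int \<Rightarrow> 'k::comm_ring_1) \<Rightarrow> 'k qH \<Rightarrow> 'k qH" where
  "phiA \<alpha> = lin_ext (\<lambda>n m. hscale (bprod \<alpha> n m) (xy n m))"

definition phi1 :: "'k::comm_ring_1 \<Rightarrow> (int \<Rightarrow> 'k) \<Rightarrow> 'k qH \<Rightarrow> 'k qH" where
  "phi1 q \<beta> = lin_ext (\<lambda>n m. xy n m +
      (\<Sum>l<m. hscale (qfall q m (m - l))
         (hscale (bprod \<beta> n (m - l)) (xy (n + int (m - l)) l)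
          - hscale (bprod \<beta> n (m - l - 1) * \<beta> (n + int m - 1)) (xy (n + int (m - l) - 1) l))))"

end

theory Submission imports Defs begin

text \<open>All maps involved are k-linear and given by their values on the basis x^n y^m.
Phi = phi_alpha theta_r sends x^n y^m to alpha_{n+r,m} x^{n+r} y^m, so when no alpha_n vanishes
it is invertible with inverse x^n y^m \<mapsto> alpha_{n,m}^-1 x^{n-r} y^m. Hence
Phi phi^(1)_beta Phi^-1 (x^n y^m) = alpha_{n,m}^-1 Phi (phi^(1)_beta (x^{n-r} y^m)), and the terms
x^{n+m-l} y^l and x^{n+m-l-1} y^l pick up the factors alpha_{n+m-l,l} and alpha_{n+m-l-1,l}.
Splitting alpha_{n,m} = alpha_{n,m-l} alpha_{n+m-l,l} = alpha_{n,m-l-1} alpha_{n+m-1} alpha_{n+m-l-1,l}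
turns the coefficients beta_{n-r,j} into (alpha^-1 beta[-r])_{n,j}. The second claim is the case
r = 0.\<close>

lemma lookup_hscale [simp]: "Poly_Mapping.lookup (hscale c p) k = c * Poly_Mapping.lookup p k"
  unfolding hscale_def by transfer (auto simp: when_def)

lemma hscale_add_left: "hscale (a + b) p = hscale a p + hscale b p"
  by (rule poly_mapping_eqI) (simp add: lookup_add algebra_simps)

lemma hscale_add_right: "hscale c (p + q) = hscale c p + hscale c q"
  by (rule poly_mapping_eqI) (simp add: lookup_add algebra_simps)

lemma hscale_diff_right: "hscale c (p - q) = hscale c p - hscale c q"
  by (rule poly_mapping_eqI) (simp add: lookup_minus algebra_simps)

lemma hscale_zero_left [simp]: "hscale 0 p = 0"
  by (rule poly_mapping_eqI) simp

lemma hscale_zero_right [simp]: "hscale c 0 = 0"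
  by (rule poly_mapping_eqI) simp

lemma hscale_one [simp]: "hscale 1 p = p"
  by (rule poly_mapping_eqI) simp

lemma hscale_hscale [simp]: "hscale a (hscale b p) = hscale (a * b) p"
  by (rule poly_mapping_eqI) (simp add: algebra_simps)

lemma hscale_sum_right: "hscale c (sum f A) = (\<Sum>x\<in>A. hscale c (f x))"
  by (induction A rule: infinite_finite_induct) (auto simp: hscale_add_right)

lemma lin_ext_superset:
  assumes "finite S" "Poly_Mapping.keys p \<subseteq> S"
  shows "lin_ext g p = (\<Sum>k\<in>S. hscale (Poly_Mapping.lookup p k) (g (fst k) (snd k)))"
  unfolding lin_ext_def
  by (rule sum.mono_neutral_left) (use assms in \<open>auto simp: in_keys_iff\<close>)

lemma lin_ext_add: "lin_ext g (p + q) = lin_ext g p + lin_ext g q"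
proof -
  let ?S = "Poly_Mapping.keys p \<union> Poly_Mapping.keys q"
  let ?t = "\<lambda>p k. hscale (Poly_Mapping.lookup p k) (g (fst k) (snd k))"
  have "lin_ext g (p + q) = (\<Sum>k\<in>?S. ?t (p + q) k)"
    by (rule lin_ext_superset) (auto simp: in_keys_iff lookup_add)
  also have "\<dots> = (\<Sum>k\<in>?S. ?t p k) + (\<Sum>k\<in>?S. ?t q k)"
    by (simp add: lookup_add hscale_add_left sum.distrib)
  also have "\<dots> = lin_ext g p + lin_ext g q"
    by (subst (1 2) lin_ext_superset[of ?S]) auto
  finally show ?thesis .
qed

lemma lin_ext_diff: "lin_ext g (p - q) = lin_ext g p - lin_ext g q"
  using lin_ext_add[of g "p - q" q] by (simp add: eq_diff_eq)

lemma lin_ext_hscale: "lin_ext g (hscale c p) = hscale c (lin_ext g p)"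
proof -
  have "lin_ext g (hscale c p)
      = (\<Sum>k\<in>Poly_Mapping.keys p. hscale (Poly_Mapping.lookup (hscale c p) k) (g (fst k) (snd k)))"
    by (rule lin_ext_superset) (auto simp: in_keys_iff)
  then show ?thesis
    by (simp add: lin_ext_def hscale_sum_right)
qed

lemma lin_ext_zero [simp]: "lin_ext g 0 = 0"
  by (simp add: lin_ext_def)

lemma lin_ext_sum: "lin_ext g (sum f A) = (\<Sum>x\<in>A. lin_ext g (f x))"
  by (induction A rule: infinite_finite_induct) (auto simp: lin_ext_add)

lemma lin_ext_xy [simp]: "lin_ext g (xy n m) = g n m"
proof -
  have "lin_ext g (xy n m) = (\<Sum>k\<in>{(n, m)}. hscale (Poly_Mapping.lookup (xy n m) k) (g (fst k) (snd k)))"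
    by (rule lin_ext_superset) (auto simp: xy_def)
  then show ?thesis
    by (simp add: xy_def)
qed

lemma lin_ext_xy_id [simp]: "lin_ext xy p = p"
proof (rule poly_mapping_eqI)
  fix k
  have "Poly_Mapping.lookup (lin_ext xy p) k
      = (\<Sum>x\<in>Poly_Mapping.keys p. if x = k then Poly_Mapping.lookup p x else 0)"
    unfolding lin_ext_def lookup_sum xy_def
    by (rule sum.cong) (auto simp: lookup_single when_def)
  then show "Poly_Mapping.lookup (lin_ext xy p) k = Poly_Mapping.lookup p k"
    by (simp add: in_keys_iff)
qed

lemma lin_ext_lin_ext: "lin_ext f (lin_ext g p) = lin_ext (\<lambda>n m. lin_ext f (g n m)) p"
proof -
  have "lin_ext f (lin_ext g p)
      = (\<Sum>k\<in>Poly_Mapping.keys p. lin_ext f (hscale (Poly_Mapping.lookup p k) (g (fst k) (snd k))))"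
    by (subst (2) lin_ext_def) (simp add: lin_ext_sum)
  then show ?thesis
    by (simp add: lin_ext_hscale lin_ext_def[of "\<lambda>n m. lin_ext f (g n m)"])
qed

lemma lin_ext_comp: "lin_ext f \<circ> lin_ext g = lin_ext (\<lambda>n m. lin_ext f (g n m))"
  by (simp add: fun_eq_iff lin_ext_lin_ext)

lemma inv_lin_ext:
  assumes "\<And>n m. lin_ext f (g n m) = xy n m" and "\<And>n m. lin_ext g (f n m) = xy n m"
  shows "inv (lin_ext f) = lin_ext g"
  by (rule inv_unique_comp) (simp_all add: lin_ext_comp assms fun_eq_iff)

lemma bprod_add: "bprod a n (j + l) = bprod a n j * bprod a (n + int j) l"
  by (induction l) (simp_all add: bprod_def algebra_simps)

lemma bprod_Suc: "bprod a n (Suc j) = bprod a n j * a (n + int j)"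
  by (simp add: bprod_def)

lemma bprod_mult: "bprod (\<lambda>k. a k * b k) n j = bprod a n j * bprod b n j"
  by (simp add: bprod_def prod.distrib)

lemma bprod_inverse: "bprod (\<lambda>k. inverse (a k :: 'k::field)) n j = inverse (bprod a n j)"
  using prod_inversef[of "\<lambda>i. a (n + int i)" "{..<j}"] by (simp add: bprod_def comp_def)

lemma bprod_shift: "bprod (\<lambda>k. b (k - r)) n j = bprod b (n - r) j"
  by (simp add: bprod_def algebra_simps)

lemma bprod_nonzero: "\<forall>n. a n \<noteq> (0::'k::field) \<Longrightarrow> bprod a n j \<noteq> 0"
  by (simp add: bprod_def)

lemma bprod_split_at:
  "l \<le> m \<Longrightarrow> bprod a n m = bprod a n (m - l) * bprod a (n + int (m - l)) l"
  using bprod_add[of a n "m - l" l] by simp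

lemma bprod_split_at_last:
  assumes "l < m"
  shows "bprod a n m = bprod a n (m - Suc l) * a (n + int m - 1) * bprod a (n + int (m - Suc l)) l"
proof -
  obtain j where m: "m = Suc (j + l)"
    using \<open>l < m\<close> less_iff_Suc_add by (auto simp: add.commute)
  show ?thesis
    unfolding m bprod_Suc by (simp add: bprod_add algebra_simps)
qed

lemma bprod_twist_split:
  fixes \<alpha> \<beta> :: "int \<Rightarrow> 'k::field"
  assumes "\<forall>n. \<alpha> n \<noteq> 0" and "l \<le> m"
  shows "inverse (bprod \<alpha> n m) * bprod \<beta> (n - r) (m - l) * bprod \<alpha> (n + int m - int l) l
       = bprod (\<lambda>k. inverse (\<alpha> k) * \<beta> (k - r)) n (m - l)"
  using bprod_nonzero[OF assms(1)]
  unfolding bprod_mult bprod_inverse bprod_shift bprod_split_at[OF assms(2), of \<alpha>]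
  using assms(2) by (simp add: field_simps of_nat_diff)

lemma bprod_twist_split_last:
  fixes \<alpha> \<beta> :: "int \<Rightarrow> 'k::field"
  assumes "\<forall>n. \<alpha> n \<noteq> 0" and "l < m"
  shows "inverse (bprod \<alpha> n m) * bprod \<beta> (n - r) (m - Suc l) * \<beta> (n - r + int m - 1)
           * bprod \<alpha> (n + int m - int l - 1) l
       = bprod (\<lambda>k. inverse (\<alpha> k) * \<beta> (k - r)) n (m - Suc l)
           * (inverse (\<alpha> (n + int m - 1)) * \<beta> (n + int m - 1 - r))"
  using bprod_nonzero[OF assms(1)] assms(1)
  unfolding bprod_mult bprod_inverse bprod_shift bprod_split_at_last[OF assms(2), of \<alpha>]
  using assms(2) by (simp add: field_simps of_nat_diff)

lemma phiA_theta_lin_ext: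
  "phiA \<alpha> \<circ> theta r = lin_ext (\<lambda>n m. hscale (bprod \<alpha> (n + r) m) (xy (n + r) m))"
  by (simp add: phiA_def theta_def lin_ext_comp)

lemma inv_phiA_theta:
  fixes \<alpha> :: "int \<Rightarrow> 'k::field"
  assumes "\<forall>n. \<alpha> n \<noteq> 0"
  shows "inv (phiA \<alpha> \<circ> theta r) = lin_ext (\<lambda>n m. hscale (inverse (bprod \<alpha> n m)) (xy (n - r) m))"
  unfolding phiA_theta_lin_ext
  by (rule inv_lin_ext) (simp_all add: lin_ext_hscale bprod_nonzero assms)

lemma phiA_theta_conj_phi1_xy:
  fixes \<alpha> \<beta> :: "int \<Rightarrow> 'k::field"
  assumes nz: "\<forall>n. \<alpha> n \<noteq> 0"
  shows "lin_ext (\<lambda>n m. hscale (bprod \<alpha> (n + r) m) (xy (n + r) m))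
           (phi1 q \<beta> (hscale (inverse (bprod \<alpha> n m)) (xy (n - r) m)))
         = phi1 q (\<lambda>n. inverse (\<alpha> n) * \<beta> (n - r)) (xy n m)"
proof -
  let ?\<gamma> = "\<lambda>n. inverse (\<alpha> n) * \<beta> (n - r)"
  \<comment> \<open>The two coefficient identities, in the shape the simplifier gives the summands of phi1.\<close>
  have c1: "inverse (bprod \<alpha> n m) * (qfall q m (m - l) * bprod \<beta> (n - r) (m - l))
              * bprod \<alpha> (n + (int m - int l)) l = qfall q m (m - l) * bprod ?\<gamma> n (m - l)"
    if "l < m" for l
    using bprod_twist_split[where \<alpha> = \<alpha> and l = l and m = m and n = n and \<beta> = \<beta> and r = r]
      nz that by (simp add: algebra_simps)
  have c2: "inverse (bprod \<alpha> n m) * (qfall q m (m - l)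
              * (bprod \<beta> (n - r) (m - Suc l) * \<beta> (n - r + int m - 1)))
              * bprod \<alpha> (n + (int m - int l) - 1) l
            = qfall q m (m - l) * (bprod ?\<gamma> n (m - Suc l)
              * (inverse (\<alpha> (n + int m - 1)) * \<beta> (n + int m - 1 - r)))"
    if "l < m" for l
    using bprod_twist_split_last[where \<alpha> = \<alpha> and l = l and m = m and n = n and \<beta> = \<beta> and r = r]
      nz that by (simp add: algebra_simps)
  have idx: "n + (int m + (- int l - 1)) = n + (int m - int l) - 1" for l
    by simp
  show ?thesis
    by (simp add: phi1_def lin_ext_hscale lin_ext_add lin_ext_sum lin_ext_diff hscale_add_right
        hscale_sum_right hscale_diff_right bprod_nonzero nz idx c1 c2 cong: sum.cong_simp)
qed

lemma phiA_theta_conj_phi1: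
  fixes \<alpha> \<beta> :: "int \<Rightarrow> 'k::field"
  assumes "\<forall>n. \<alpha> n \<noteq> 0"
  shows "(phiA \<alpha> \<circ> theta r) \<circ> phi1 q \<beta> \<circ> inv (phiA \<alpha> \<circ> theta r)
           = phi1 q (\<lambda>n. inverse (\<alpha> n) * \<beta> (n - r))"
proof -
  obtain g where g: "phi1 q \<beta> = lin_ext g"
    by (simp add: phi1_def)
  obtain g' where g': "phi1 q (\<lambda>n. inverse (\<alpha> n) * \<beta> (n - r)) = lin_ext g'"
    by (simp add: phi1_def)
  show ?thesis
    unfolding inv_phiA_theta[OF assms]
    unfolding phiA_theta_lin_ext g g'
    using phiA_theta_conj_phi1_xy[OF assms, where r = r and q = q and \<beta> = \<beta>]
    by (simp add: fun_eq_iff lin_ext_lin_ext g g')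
qed

lemma theta_zero: "theta 0 = id"
  by (simp add: theta_def fun_eq_iff)

theorem lemma3p15:
  fixes q :: "'k::field" and \<alpha> \<beta> :: "int \<Rightarrow> 'k" and r :: int
  assumes "q \<noteq> 0" and "not_root_of_unity q"
    and "\<forall>n. \<alpha> n \<noteq> 0"
  shows "(phiA \<alpha> \<circ> theta r) \<circ> phi1 q \<beta> \<circ> inv (phiA \<alpha> \<circ> theta r)
           = phi1 q (\<lambda>n. inverse (\<alpha> n) * \<beta> (n - r))
         \<and> phiA \<alpha> \<circ> phi1 q \<beta> \<circ> inv (phiA \<alpha>) = phi1 q (\<lambda>n. inverse (\<alpha> n) * \<beta> n)"
  using phiA_theta_conj_phi1[OF assms(3), where r = r] phiA_theta_conj_phi1[OF assms(3), where r = 0]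
  by (simp add: theta_zero)

end
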